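(* Fix a monomial order on $S$. Let $J,E,E'$ be ideals of $S$ such that $(J,E)$ and $(J,E')$ are G-nice pairs. The following are equivalent: (a) $J\cap E+J\cap E'=J\cap(E+E')$ and $(J,E+E')$ is a G-nice pair; (b) $\mathrm{in}(J\cap E+J\cap E')=\mathrm{in}(J)\cap\mathrm{in}(E+E')$.
   Context: $K$ is a field and $S=K[x_1,\ldots,x_n]$ with a fixed monomial order. For $0\neq f\in S$, $\mathrm{in}(f)$ denotes its leading monomial; for an ideal $I$, $\mathrm{in}(I)$ is the ideal generated by the leading monomials of the nonzero elements of $I$. A pair $(J,E)$ of ideals of $S$ is called Gröbner nice (G-nice) if $\mathrm{in}(J+E)=\mathrm{in}(J)+\mathrm{in}(E)$ (equivalently, the union of a Gröbner basis of $J$ and a Gröbner basis of $E$ is a Gröbner basis of $J+E$; equivalently, $\mathrm{in}(J\cap E)=\mathrm{in}(J)\cap\mathrm{in}(E)$). *)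

theory Defs
  imports "HOL-Library.Poly_Mapping"
begin

text \<open>Multivariate polynomials over a field K in the variables of a finite type 'v
  (i.e. S = K[x_1,...,x_n] with n = CARD('v)): monomials are exponent vectors,
  monomials are finitely supported maps from monomials to coefficients.\<close>

type_synonym ('v, 'a) mpoly = "('v \<Rightarrow>\<^sub>0 nat) \<Rightarrow>\<^sub>0 'a"

definition monomial_order :: "(('v \<Rightarrow>\<^sub>0 nat) \<Rightarrow> ('v \<Rightarrow>\<^sub>0 nat) \<Rightarrow> bool) \<Rightarrow> bool" where
  "monomial_order le \<longleftrightarrow>
     (\<forall>s. le s s) \<and>
     (\<forall>s t. le s t \<and> le t s \<longrightarrow> s = t) \<and>
     (\<forall>s t u. le s t \<and> le t u \<longrightarrow> le s u) \<and>
     (\<forall>s t. le s t \<or> le t s) \<and>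
     (\<forall>s t u. le s t \<longrightarrow> le (s + u) (t + u)) \<and>
     (\<forall>t. le 0 t)"

definition is_ideal :: "'r::comm_ring_1 set \<Rightarrow> bool" where
  "is_ideal I \<longleftrightarrow> 0 \<in> I \<and> (\<forall>a\<in>I. \<forall>b\<in>I. a + b \<in> I) \<and> (\<forall>r. \<forall>a\<in>I. r * a \<in> I)"

definition ideal_gen :: "'r::comm_ring_1 set \<Rightarrow> 'r set" where
  "ideal_gen G = \<Inter>{I. is_ideal I \<and> G \<subseteq> I}"

definition ideal_sum :: "'r::comm_ring_1 set \<Rightarrow> 'r set \<Rightarrow> 'r set" where
  "ideal_sum I J = {a + b | a b. a \<in> I \<and> b \<in> J}"

definition lead_mon :: "(('v \<Rightarrow>\<^sub>0 nat) \<Rightarrow> ('v \<Rightarrow>\<^sub>0 nat) \<Rightarrow> bool) \<Rightarrow> ('v, 'a::zero) mpoly \<Rightarrow> 'v \<Rightarrow>\<^sub>0 nat" where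
  "lead_mon le f = (THE t. t \<in> Poly_Mapping.keys f \<and> (\<forall>s\<in>Poly_Mapping.keys f. le s t))"

definition init_ideal :: "(('v \<Rightarrow>\<^sub>0 nat) \<Rightarrow> ('v \<Rightarrow>\<^sub>0 nat) \<Rightarrow> bool) \<Rightarrow> ('v, 'a::field) mpoly set \<Rightarrow> ('v, 'a) mpoly set" where
  "init_ideal le I = ideal_gen {Poly_Mapping.single (lead_mon le f) 1 | f. f \<in> I \<and> f \<noteq> 0}"

definition g_nice :: "(('v \<Rightarrow>\<^sub>0 nat) \<Rightarrow> ('v \<Rightarrow>\<^sub>0 nat) \<Rightarrow> bool) \<Rightarrow> ('v, 'a::field) mpoly set \<Rightarrow> ('v, 'a) mpoly set \<Rightarrow> bool" where
  "g_nice le J E \<longleftrightarrow> init_ideal le (ideal_sum J E) = ideal_sum (init_ideal le J) (init_ideal le E)"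

end

theory Submission
  imports Defs Complex_Main
begin

(* Identify an initial ideal with its set of leading monomials: in(I) is the span of the monomials
   lead_mons I, so equalities of initial ideals become equalities of monomial sets.  By the usual
   reduction argument (a monomial order is a well-order by Dickson's lemma), (A, B) is G-nice iff
   lead_mons (A + B) = lead_mons A \<union> lead_mons B iff lead_mons (A \<inter> B) = lead_mons A \<inter> lead_mons B,
   and two nested ideals with the same leading monomials coincide.  For
   P = J \<inter> E + J \<inter> E' \<subseteq> Q = J \<inter> (E + E') we have
   lead_mons P \<subseteq> lead_mons Q \<subseteq> lead_mons J \<inter> lead_mons (E + E'), so (b) holds iff both inclusions
   are equalities, i.e. iff P = Q and (J, E + E') is G-nice. *)

lemma nat_seq_mono_subseq:
  fixes a :: "nat \<Rightarrow> nat"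
  shows "\<exists>\<phi>::nat \<Rightarrow> nat. strict_mono \<phi> \<and> mono (a \<circ> \<phi>)"
proof -
  obtain \<phi> where \<phi>: "strict_mono \<phi>" "monoseq (a \<circ> \<phi>)"
    using seq_monosub[of a] by (auto simp: o_def)
  show ?thesis
  proof (cases "mono (a \<circ> \<phi>)")
    case False
    then have anti: "m \<le> n \<Longrightarrow> a (\<phi> n) \<le> a (\<phi> m)" for m n
      using \<phi>(2) unfolding monoseq_def mono_def by auto
    obtain N where N: "\<And>n. a (\<phi> N) \<le> a (\<phi> n)"
      using ex_has_least_nat[of "\<lambda>_. True" 0 "a \<circ> \<phi>"] by auto
    \<comment> \<open>an antitone sequence of naturals is constant from its minimum on\<close>
    have "a (\<phi> (n + N)) = a (\<phi> N)" for n
      using anti[of N "n + N"] N[of "n + N"] by simp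
    moreover have "strict_mono (\<lambda>n. \<phi> (n + N))"
      using \<phi>(1) by (simp add: strict_mono_def)
    ultimately show ?thesis
      by (intro exI[of _ "\<lambda>n. \<phi> (n + N)"]) (simp add: mono_def)
  qed (use \<phi>(1) in blast)
qed

lemma finite_coordinates_mono_subseq:
  fixes g :: "nat \<Rightarrow> ('v \<Rightarrow>\<^sub>0 nat)"
  assumes "finite V"
  shows "\<exists>\<phi>::nat \<Rightarrow> nat. strict_mono \<phi> \<and> (\<forall>v\<in>V. mono (\<lambda>n. Poly_Mapping.lookup (g (\<phi> n)) v))"
  using assms
proof (induction V rule: finite_induct)
  case empty
  show ?case using strict_mono_id by auto
next
  case (insert x V)
  then obtain \<phi> :: "nat \<Rightarrow> nat" where \<phi>: "strict_mono \<phi>" "\<forall>v\<in>V. mono (\<lambda>n. Poly_Mapping.lookup (g (\<phi> n)) v)"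
    by blast
  obtain \<psi> :: "nat \<Rightarrow> nat" where \<psi>: "strict_mono \<psi>" "mono (\<lambda>n. Poly_Mapping.lookup (g (\<phi> (\<psi> n))) x)"
    using nat_seq_mono_subseq[of "\<lambda>n. Poly_Mapping.lookup (g (\<phi> n)) x"] by (auto simp: o_def)
  have "mono (\<lambda>n. Poly_Mapping.lookup (g (\<phi> (\<psi> n))) v)" if "v \<in> V" for v
    using \<phi>(2) that strict_mono_mono[OF \<psi>(1)] by (auto simp: mono_def)
  moreover have "strict_mono (\<phi> \<circ> \<psi>)"
    using \<phi>(1) \<psi>(1) by (simp add: strict_mono_def)
  ultimately show ?case
    using \<psi>(2) by (intro exI[of _ "\<phi> \<circ> \<psi>"]) (auto simp: o_def)
qed

lemma dickson:
  fixes g :: "nat \<Rightarrow> ('v::finite \<Rightarrow>\<^sub>0 nat)"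
  obtains i j d where "i < j" "g j = g i + d"
proof -
  obtain \<phi> :: "nat \<Rightarrow> nat" where \<phi>: "strict_mono \<phi>" "\<forall>v. mono (\<lambda>n. Poly_Mapping.lookup (g (\<phi> n)) v)"
    using finite_coordinates_mono_subseq[of UNIV g] by auto
  have "Poly_Mapping.lookup (g (\<phi> 0)) v \<le> Poly_Mapping.lookup (g (\<phi> 1)) v" for v
    using \<phi>(2) by (simp add: mono_def)
  then have "g (\<phi> 1) = g (\<phi> 0) + (g (\<phi> 1) - g (\<phi> 0))"
    by (intro poly_mapping_eqI) (simp add: lookup_add lookup_minus)
  moreover have "\<phi> 0 < \<phi> 1"
    using \<phi>(1) by (simp add: strict_mono_def)
  ultimately show thesis by (rule that[rotated])
qed

lemma lookup_single_mult:
  fixes f :: "'k::cancel_comm_monoid_add \<Rightarrow>\<^sub>0 'a::comm_semiring_1"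
  shows "Poly_Mapping.lookup (Poly_Mapping.single d c * f) (d + s) = c * Poly_Mapping.lookup f s"
proof -
  have "Poly_Mapping.lookup (Poly_Mapping.single d c * f) (d + s)
      = (\<Sum>l. (c when d = l) * (\<Sum>q. Poly_Mapping.lookup f q when d + s = l + q))"
    by (simp add: lookup_mult lookup_single)
  also have "\<dots> = c * (\<Sum>q. Poly_Mapping.lookup f q when d + s = d + q)"
    by (simp add: when_mult)
  also have "\<dots> = c * Poly_Mapping.lookup f s"
    by simp
  finally show ?thesis .
qed

lemma lookup_single_zero_mult:
  fixes f :: "'k::cancel_comm_monoid_add \<Rightarrow>\<^sub>0 'a::comm_semiring_1"
  shows "Poly_Mapping.lookup (Poly_Mapping.single 0 c * f) s = c * Poly_Mapping.lookup f s"
  using lookup_single_mult[of 0 c f s] by simp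

lemma keys_single_mult_subset:
  fixes f :: "'k::cancel_comm_monoid_add \<Rightarrow>\<^sub>0 'a::comm_semiring_1"
  shows "Poly_Mapping.keys (Poly_Mapping.single d c * f) \<subseteq> (+) d ` Poly_Mapping.keys f"
  using keys_mult[of "Poly_Mapping.single d c" f] by (auto split: if_splits)

lemma ideal_zero: "is_ideal I \<Longrightarrow> 0 \<in> I"
  unfolding is_ideal_def by blast

lemma ideal_add: "is_ideal I \<Longrightarrow> a \<in> I \<Longrightarrow> b \<in> I \<Longrightarrow> a + b \<in> I"
  unfolding is_ideal_def by blast

lemma ideal_mult: "is_ideal I \<Longrightarrow> a \<in> I \<Longrightarrow> r * a \<in> I"
  unfolding is_ideal_def by blast

lemma ideal_diff: "is_ideal I \<Longrightarrow> a \<in> I \<Longrightarrow> b \<in> I \<Longrightarrow> a - b \<in> I"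
  using ideal_add[of I a "-1 * b"] ideal_mult[of I b "-1"] by simp

lemma ideal_sum_closed: "is_ideal I \<Longrightarrow> (\<And>i. i \<in> S \<Longrightarrow> f i \<in> I) \<Longrightarrow> sum f S \<in> I"
  by (induction S rule: infinite_finite_induct) (auto intro: ideal_zero ideal_add)

lemma is_ideal_Int: "is_ideal A \<Longrightarrow> is_ideal B \<Longrightarrow> is_ideal (A \<inter> B)"
  unfolding is_ideal_def by blast

lemma is_ideal_ideal_sum:
  assumes A: "is_ideal A" and B: "is_ideal B"
  shows "is_ideal (ideal_sum A B)"
  unfolding is_ideal_def ideal_sum_def
proof (intro conjI ballI allI; clarify?)
  show "\<exists>a b. 0 = a + b \<and> a \<in> A \<and> b \<in> B"
    using ideal_zero[OF A] ideal_zero[OF B] by force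
next
  fix a b a' b' assume "a \<in> A" "b \<in> B" "a' \<in> A" "b' \<in> B"
  then show "\<exists>x y. a + b + (a' + b') = x + y \<and> x \<in> A \<and> y \<in> B"
    using ideal_add[OF A] ideal_add[OF B] by (metis add.assoc add.left_commute)
next
  fix r a b assume "a \<in> A" "b \<in> B"
  then show "\<exists>x y. r * (a + b) = x + y \<and> x \<in> A \<and> y \<in> B"
    using ideal_mult[OF A] ideal_mult[OF B] by (metis distrib_left)
qed

lemma ideal_sum_commute: "ideal_sum A B = ideal_sum B A"
  unfolding ideal_sum_def by (metis add.commute)

lemma mem_ideal_sum_left: "is_ideal B \<Longrightarrow> a \<in> A \<Longrightarrow> a \<in> ideal_sum A B"
  unfolding ideal_sum_def using ideal_zero[of B] by force

lemma mem_ideal_sum_right: "is_ideal A \<Longrightarrow> b \<in> B \<Longrightarrow> b \<in> ideal_sum A B"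
  using mem_ideal_sum_left ideal_sum_commute by metis

lemma ideal_sum_least: "is_ideal C \<Longrightarrow> A \<subseteq> C \<Longrightarrow> B \<subseteq> C \<Longrightarrow> ideal_sum A B \<subseteq> C"
  unfolding ideal_sum_def using ideal_add[of C] by blast

definition mon_span :: "('v \<Rightarrow>\<^sub>0 nat) set \<Rightarrow> ('v, 'a::zero) mpoly set" where
  "mon_span M = {p. Poly_Mapping.keys p \<subseteq> M}"

lemma mon_span_Int: "mon_span A \<inter> mon_span B = mon_span (A \<inter> B)"
  unfolding mon_span_def by auto

lemma mon_span_inject: "mon_span A = (mon_span B :: ('v, 'a::zero_neq_one) mpoly set) \<longleftrightarrow> A = B"
proof
  assume eq: "mon_span A = (mon_span B :: ('v, 'a) mpoly set)"
  have "t \<in> A \<longleftrightarrow> (Poly_Mapping.single t (1::'a) \<in> mon_span A)" for t A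
    by (simp add: mon_span_def)
  then show "A = B"
    using eq by blast
qed simp

lemma monomial_expansion:
  "p = (\<Sum>s\<in>Poly_Mapping.keys p. Poly_Mapping.single s (Poly_Mapping.lookup p s))"
  by (rule poly_mapping_eqI) (simp add: lookup_sum lookup_single when_def in_keys_iff)

lemma ideal_sum_mon_span:
  "ideal_sum (mon_span A) (mon_span B) = (mon_span (A \<union> B) :: ('v, 'a::comm_ring_1) mpoly set)"
proof
  show "ideal_sum (mon_span A) (mon_span B) \<subseteq> (mon_span (A \<union> B) :: ('v, 'a) mpoly set)"
    unfolding ideal_sum_def mon_span_def using keys_add by fastforce
next
  show "mon_span (A \<union> B) \<subseteq> (ideal_sum (mon_span A) (mon_span B) :: ('v, 'a) mpoly set)"
  proof
    fix p :: "('v, 'a) mpoly"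
    assume p: "p \<in> mon_span (A \<union> B)"
    let ?m = "\<lambda>s. Poly_Mapping.single s (Poly_Mapping.lookup p s)"
    define a where "a = (\<Sum>s\<in>Poly_Mapping.keys p \<inter> A. ?m s)"
    define b where "b = (\<Sum>s\<in>Poly_Mapping.keys p - A. ?m s)"
    have "p = a + b"
      unfolding a_def b_def by (subst monomial_expansion) (simp add: sum.Int_Diff)
    moreover have "a \<in> mon_span A" "b \<in> mon_span B"
      using keys_sum[of ?m "Poly_Mapping.keys p \<inter> A"] keys_sum[of ?m "Poly_Mapping.keys p - A"] p
      unfolding a_def b_def mon_span_def by auto
    ultimately show "p \<in> ideal_sum (mon_span A) (mon_span B)"
      unfolding ideal_sum_def by blast
  qed
qed

lemma is_ideal_mon_span:
  assumes "\<And>t d. t \<in> M \<Longrightarrow> d + t \<in> M"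
  shows "is_ideal (mon_span M :: ('v, 'a::comm_ring_1) mpoly set)"
  unfolding is_ideal_def mon_span_def
proof (intro conjI ballI allI; simp)
  fix a b :: "('v, 'a) mpoly"
  assume "Poly_Mapping.keys a \<subseteq> M" "Poly_Mapping.keys b \<subseteq> M"
  then show "Poly_Mapping.keys (a + b) \<subseteq> M"
    using keys_add[of a b] by blast
next
  fix r a :: "('v, 'a) mpoly"
  assume "Poly_Mapping.keys a \<subseteq> M"
  then show "Poly_Mapping.keys (r * a) \<subseteq> M"
    using keys_mult[of r a] assms by blast
qed

lemma mon_span_subset_ideal:
  fixes I :: "('v, 'a::comm_ring_1) mpoly set"
  assumes I: "is_ideal I" and "\<And>t. t \<in> M \<Longrightarrow> Poly_Mapping.single t 1 \<in> I"
  shows "mon_span M \<subseteq> I"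
proof
  fix p :: "('v, 'a) mpoly"
  assume "p \<in> mon_span M"
  have "Poly_Mapping.single s (Poly_Mapping.lookup p s) \<in> I" if "s \<in> Poly_Mapping.keys p" for s
  proof -
    have "Poly_Mapping.single 0 (Poly_Mapping.lookup p s) * Poly_Mapping.single s 1 \<in> I"
      using that \<open>p \<in> mon_span M\<close> assms(2) ideal_mult[OF I] by (auto simp: mon_span_def)
    then show ?thesis
      by (simp add: mult_single)
  qed
  then show "p \<in> I"
    by (subst monomial_expansion) (rule ideal_sum_closed[OF I])
qed

locale monomial_ordering =
  fixes le :: "('v::finite \<Rightarrow>\<^sub>0 nat) \<Rightarrow> ('v \<Rightarrow>\<^sub>0 nat) \<Rightarrow> bool"
  assumes monomial_order: "monomial_order le"
begin

abbreviation lt :: "('v \<Rightarrow>\<^sub>0 nat) \<Rightarrow> ('v \<Rightarrow>\<^sub>0 nat) \<Rightarrow> bool" where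
  "lt s t \<equiv> le s t \<and> s \<noteq> t"

abbreviation lm :: "('v, 'a::zero) mpoly \<Rightarrow> 'v \<Rightarrow>\<^sub>0 nat" where
  "lm \<equiv> lead_mon le"

lemma le_refl: "le s s"
  using monomial_order unfolding monomial_order_def by blast

lemma le_antisym: "le s t \<Longrightarrow> le t s \<Longrightarrow> s = t"
  using monomial_order unfolding monomial_order_def by blast

lemma le_trans: "le s t \<Longrightarrow> le t u \<Longrightarrow> le s u"
  using monomial_order unfolding monomial_order_def by blast

lemma le_total: "le s t \<or> le t s"
  using monomial_order unfolding monomial_order_def by blast

lemma le_add_left: "le s t \<Longrightarrow> le (u + s) (u + t)"
proof -
  assume "le s t"
  then have "le (s + u) (t + u)"
    using monomial_order unfolding monomial_order_def by blast
  then show ?thesis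
    by (simp add: add.commute)
qed

lemma zero_le: "le 0 t"
  using monomial_order unfolding monomial_order_def by blast

lemma le_lt_trans: "le s t \<Longrightarrow> lt t u \<Longrightarrow> lt s u"
  using le_trans le_antisym by blast

lemma wf_lt: "wf {(s, t). lt s t}"
proof -
  have False if chain: "\<And>i. lt (f (Suc i)) (f i)" for f
  proof -
    have below: "le (f j) (f i)" if "i \<le> j" for i j
      using that by (induction j rule: dec_induct) (use chain le_refl le_trans in blast)+
    obtain i j d where "i < j" and j: "f j = f i + d"
      using dickson .
    have "le (f i + 0) (f i + d)"
      by (rule le_add_left[OF zero_le])
    then have "le (f i) (f (Suc i))"
      using below[of "Suc i" j] \<open>i < j\<close> j le_trans by auto
    then show False
      using chain le_antisym by blast
  qed
  then show ?thesis
    unfolding wf_iff_no_infinite_down_chain by auto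
qed

lemma ex_max: "finite S \<Longrightarrow> S \<noteq> {} \<Longrightarrow> \<exists>m\<in>S. S \<subseteq> {s. le s m}"
proof (induction S rule: finite_ne_induct)
  case (singleton x)
  then show ?case using le_refl by auto
next
  case (insert x S)
  then obtain m where "m \<in> S" "S \<subseteq> {s. le s m}"
    by blast
  then show ?case
    using le_total[of x m] le_refl le_trans by blast
qed

lemma lead_mon_max:
  fixes f :: "('v, 'a::zero) mpoly"
  assumes "f \<noteq> 0"
  shows "lm f \<in> Poly_Mapping.keys f \<and> Poly_Mapping.keys f \<subseteq> {s. le s (lm f)}"
proof -
  obtain m where "m \<in> Poly_Mapping.keys f" "Poly_Mapping.keys f \<subseteq> {s. le s m}"
    using ex_max[of "Poly_Mapping.keys f"] assms by auto
  then have "\<exists>!t. t \<in> Poly_Mapping.keys f \<and> (\<forall>s\<in>Poly_Mapping.keys f. le s t)"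
    using le_antisym by blast
  then have "lm f \<in> Poly_Mapping.keys f \<and> (\<forall>s\<in>Poly_Mapping.keys f. le s (lm f))"
    unfolding lead_mon_def by (rule theI')
  then show ?thesis
    by blast
qed

lemma lead_mon_in_keys: "f \<noteq> 0 \<Longrightarrow> lm f \<in> Poly_Mapping.keys f"
  using lead_mon_max by blast

lemma keys_le_lead_mon: "f \<noteq> 0 \<Longrightarrow> Poly_Mapping.keys f \<subseteq> {s. le s (lm f)}"
  using lead_mon_max by blast

lemma lookup_lead_mon: "f \<noteq> 0 \<Longrightarrow> Poly_Mapping.lookup f (lm f) \<noteq> 0"
  using lead_mon_in_keys by (simp add: in_keys_iff)

lemma lead_mon_eqI:
  assumes "Poly_Mapping.keys f \<subseteq> {s. le s t}" and "Poly_Mapping.lookup f t \<noteq> 0"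
  shows "lm f = t"
proof -
  have "f \<noteq> 0" "t \<in> Poly_Mapping.keys f"
    using assms(2) by (auto simp: in_keys_iff)
  then show ?thesis
    using assms(1) lead_mon_max le_antisym by blast
qed

lemma lead_mon_less: "f \<noteq> 0 \<Longrightarrow> Poly_Mapping.keys f \<subseteq> {s. lt s t} \<Longrightarrow> lt (lm f) t"
  using lead_mon_in_keys by blast

lemma lead_mon_induct [case_names less]:
  assumes "\<And>f. (\<And>g. g \<noteq> 0 \<Longrightarrow> lt (lm g) (lm f) \<Longrightarrow> P g) \<Longrightarrow> P f"
  shows "P f"
  by (induction f rule: wf_induct_rule[OF wf_inv_image[OF wf_lt, of lm]]) (auto intro: assms)

lemma keys_cancel_lead_mon:
  fixes f g :: "('v, 'a::field) mpoly"
  assumes "Poly_Mapping.keys f \<subseteq> {s. le s t}" and "g \<noteq> 0" and "lm g = t"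
  shows "Poly_Mapping.keys (f - Poly_Mapping.single 0 (Poly_Mapping.lookup f t / Poly_Mapping.lookup g t) * g)
    \<subseteq> {s. lt s t}"
proof -
  let ?c = "Poly_Mapping.lookup f t / Poly_Mapping.lookup g t"
  let ?h = "f - Poly_Mapping.single 0 ?c * g"
  have "Poly_Mapping.keys (Poly_Mapping.single 0 ?c * g) \<subseteq> {s. le s t}"
    using keys_single_mult_subset[of 0 ?c g] keys_le_lead_mon[OF assms(2)] assms(3) by auto
  then have keys_h: "Poly_Mapping.keys ?h \<subseteq> {s. le s t}"
    using assms(1) keys_diff[of f] by blast
  have "Poly_Mapping.lookup g t \<noteq> 0"
    using lookup_lead_mon[OF assms(2)] assms(3) by simp
  then have "Poly_Mapping.lookup ?h t = 0"
    by (simp add: lookup_minus lookup_single_zero_mult)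
  then show ?thesis
    using keys_h by (auto simp: in_keys_iff)
qed

definition lead_mons :: "('v, 'a::zero) mpoly set \<Rightarrow> ('v \<Rightarrow>\<^sub>0 nat) set" where
  "lead_mons I = {lm f | f. f \<in> I \<and> f \<noteq> 0}"

lemma lead_monsI:
  assumes "f \<in> I" and "Poly_Mapping.keys f \<subseteq> {s. le s t}" and "Poly_Mapping.lookup f t \<noteq> 0"
  shows "t \<in> lead_mons I"
  using assms lead_mon_eqI[OF assms(2,3)] unfolding lead_mons_def by force

lemma lead_monsE:
  assumes "t \<in> lead_mons I"
  obtains g where "g \<in> I" "g \<noteq> 0" "lm g = t"
  using assms unfolding lead_mons_def by blast

lemma lead_mons_mono: "A \<subseteq> B \<Longrightarrow> lead_mons A \<subseteq> lead_mons B"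
  unfolding lead_mons_def by blast

lemma lead_mons_closed_plus:
  fixes I :: "('v, 'a::field) mpoly set"
  assumes "is_ideal I" and "t \<in> lead_mons I"
  shows "d + t \<in> lead_mons I"
proof -
  obtain f where f: "f \<in> I" "f \<noteq> 0" "lm f = t"
    using assms(2) by (rule lead_monsE)
  show ?thesis
  proof (rule lead_monsI)
    show "Poly_Mapping.single d 1 * f \<in> I"
      by (rule ideal_mult[OF assms(1) f(1)])
    show "Poly_Mapping.keys (Poly_Mapping.single d 1 * f) \<subseteq> {s. le s (d + t)}"
      using keys_single_mult_subset[of d 1 f] keys_le_lead_mon[OF f(2)] f(3) le_add_left by fastforce
    show "Poly_Mapping.lookup (Poly_Mapping.single d 1 * f) (d + t) \<noteq> 0"
      using lookup_lead_mon[OF f(2)] f(3) by (simp add: lookup_single_mult)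
  qed
qed

lemma init_ideal_eq_mon_span:
  fixes I :: "('v, 'a::field) mpoly set"
  assumes "is_ideal I"
  shows "init_ideal le I = mon_span (lead_mons I)"
proof -
  let ?G = "{Poly_Mapping.single (lm f) (1::'a) | f. f \<in> I \<and> f \<noteq> 0}"
  have "ideal_gen ?G \<subseteq> mon_span (lead_mons I)"
    unfolding ideal_gen_def
    using is_ideal_mon_span[OF lead_mons_closed_plus[OF assms]]
    by (intro Inter_lower) (auto simp: mon_span_def lead_mons_def)
  moreover have "mon_span (lead_mons I) \<subseteq> ideal_gen ?G"
    unfolding ideal_gen_def
    by (intro Inter_greatest mon_span_subset_ideal) (auto simp: lead_mons_def)
  ultimately show ?thesis
    unfolding init_ideal_def by blast
qed

lemma g_nice_iff_lead_mons_Un: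
  fixes A B :: "('v, 'a::field) mpoly set"
  assumes "is_ideal A" and "is_ideal B"
  shows "g_nice le A B \<longleftrightarrow> lead_mons (ideal_sum A B) = lead_mons A \<union> lead_mons B"
  unfolding g_nice_def init_ideal_eq_mon_span[OF is_ideal_ideal_sum[OF assms]]
    init_ideal_eq_mon_span[OF assms(1)] init_ideal_eq_mon_span[OF assms(2)]
    ideal_sum_mon_span mon_span_inject ..

lemma init_ideal_eq_Int_iff:
  fixes A B C :: "('v, 'a::field) mpoly set"
  assumes "is_ideal A" and "is_ideal B" and "is_ideal C"
  shows "init_ideal le C = init_ideal le A \<inter> init_ideal le B
    \<longleftrightarrow> lead_mons C = lead_mons A \<inter> lead_mons B"
  unfolding init_ideal_eq_mon_span[OF assms(1)] init_ideal_eq_mon_span[OF assms(2)]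
    init_ideal_eq_mon_span[OF assms(3)] mon_span_Int mon_span_inject ..

lemma ideal_eq_if_lead_mons_subset:
  fixes A B :: "('v, 'a::field) mpoly set"
  assumes A: "is_ideal A" and B: "is_ideal B" and "A \<subseteq> B"
    and "lead_mons B \<subseteq> lead_mons A"
  shows "A = B"
proof -
  have "f \<in> A" if "f \<in> B" for f
    using that
  proof (induction f rule: lead_mon_induct)
    case (less f)
    show ?case
    proof (cases "f = 0")
      case True
      then show ?thesis using ideal_zero[OF A] by simp
    next
      case False
      then have "lm f \<in> lead_mons A"
        using less.prems assms(4) unfolding lead_mons_def by blast
      then obtain g where g: "g \<in> A" "g \<noteq> 0" "lm g = lm f"
        by (rule lead_monsE)
      define cg where "cg = Poly_Mapping.single 0 (Poly_Mapping.lookup f (lm f) / Poly_Mapping.lookup g (lm f)) * g"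
      have cg: "cg \<in> A"
        unfolding cg_def by (rule ideal_mult[OF A g(1)])
      have "f - cg \<in> A"
      proof (cases "f - cg = 0")
        case True
        then show ?thesis using ideal_zero[OF A] by simp
      next
        case False
        have "Poly_Mapping.keys (f - cg) \<subseteq> {s. lt s (lm f)}"
          unfolding cg_def by (rule keys_cancel_lead_mon[OF keys_le_lead_mon[OF \<open>f \<noteq> 0\<close>] g(2,3)])
        then have "lt (lm (f - cg)) (lm f)"
          by (rule lead_mon_less[OF False])
        moreover have "f - cg \<in> B"
          using ideal_diff[OF B less.prems] cg assms(3) by blast
        ultimately show ?thesis
          using less.IH[OF False] by blast
      qed
      then show ?thesis
        using ideal_add[OF A _ cg] by fastforce
    qed
  qed
  then show ?thesis
    using assms(3) by blast
qed

definition bounded_decomp ::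
    "('v, 'a::comm_ring_1) mpoly set \<Rightarrow> ('v, 'a) mpoly set \<Rightarrow> ('v \<Rightarrow>\<^sub>0 nat) \<Rightarrow> ('v, 'a) mpoly \<Rightarrow> bool" where
  "bounded_decomp A B t f \<longleftrightarrow>
     (\<exists>a\<in>A. \<exists>b\<in>B. f = a + b \<and> Poly_Mapping.keys a \<union> Poly_Mapping.keys b \<subseteq> {s. le s t})"

lemma bounded_decomp_zero: "is_ideal A \<Longrightarrow> is_ideal B \<Longrightarrow> bounded_decomp A B t 0"
  unfolding bounded_decomp_def using ideal_zero by force

lemma bounded_decomp_mem:
  assumes "is_ideal A" and "is_ideal B" and "f \<in> A \<union> B"
    and "Poly_Mapping.keys f \<subseteq> {s. le s t}"
  shows "bounded_decomp A B t f"
  using assms(3) unfolding bounded_decomp_def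
proof
  assume "f \<in> A"
  then show "\<exists>a\<in>A. \<exists>b\<in>B. f = a + b \<and> Poly_Mapping.keys a \<union> Poly_Mapping.keys b \<subseteq> {s. le s t}"
    using ideal_zero[OF assms(2)] assms(4) by (intro bexI[of _ f] bexI[of _ 0]) auto
next
  assume "f \<in> B"
  then show "\<exists>a\<in>A. \<exists>b\<in>B. f = a + b \<and> Poly_Mapping.keys a \<union> Poly_Mapping.keys b \<subseteq> {s. le s t}"
    using ideal_zero[OF assms(1)] assms(4) by (intro bexI[of _ 0] bexI[of _ f]) auto
qed

lemma bounded_decomp_add:
  assumes "is_ideal A" and "is_ideal B"
    and "bounded_decomp A B t f" and "bounded_decomp A B t g"
  shows "bounded_decomp A B t (f + g)"
proof -
  obtain a b a' b' where "a \<in> A" "b \<in> B" "f = a + b" "a' \<in> A" "b' \<in> B" "g = a' + b'"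
    and keys: "Poly_Mapping.keys a \<union> Poly_Mapping.keys b \<subseteq> {s. le s t}"
      "Poly_Mapping.keys a' \<union> Poly_Mapping.keys b' \<subseteq> {s. le s t}"
    using assms(3,4) unfolding bounded_decomp_def by blast
  moreover have "f + g = (a + a') + (b + b')"
    using calculation by (simp add: algebra_simps)
  moreover have "Poly_Mapping.keys (a + a') \<union> Poly_Mapping.keys (b + b') \<subseteq> {s. le s t}"
    using keys keys_add[of a a'] keys_add[of b b'] by blast
  ultimately show ?thesis
    unfolding bounded_decomp_def using ideal_add assms(1,2) by blast
qed

lemma bounded_decomp_mono:
  "le t t' \<Longrightarrow> bounded_decomp A B t f \<Longrightarrow> bounded_decomp A B t' f"
  unfolding bounded_decomp_def using le_trans by blast

lemma bounded_decomp_lead_mon: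
  fixes A B :: "('v, 'a::field) mpoly set"
  assumes A: "is_ideal A" and B: "is_ideal B"
    and Un: "lead_mons (ideal_sum A B) \<subseteq> lead_mons A \<union> lead_mons B"
  shows "f \<in> ideal_sum A B \<Longrightarrow> bounded_decomp A B (lm f) f"
proof (induction f rule: lead_mon_induct)
  case (less f)
  show ?case
  proof (cases "f = 0")
    case True
    then show ?thesis using bounded_decomp_zero[OF A B] by simp
  next
    case False
    then have "lm f \<in> lead_mons A \<union> lead_mons B"
      using less.prems Un unfolding lead_mons_def by blast
    then obtain g where g: "g \<in> A \<union> B" "g \<noteq> 0" "lm g = lm f"
      by (auto elim: lead_monsE)
    define cg where "cg = Poly_Mapping.single 0 (Poly_Mapping.lookup f (lm f) / Poly_Mapping.lookup g (lm f)) * g"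
    have cg: "cg \<in> A \<union> B"
      using g(1) ideal_mult[OF A] ideal_mult[OF B] unfolding cg_def by blast
    have "Poly_Mapping.keys cg \<subseteq> {s. le s (lm f)}"
      using keys_single_mult_subset[of 0 _ g] keys_le_lead_mon[OF g(2)] g(3) unfolding cg_def by auto
    then have "bounded_decomp A B (lm f) cg"
      by (rule bounded_decomp_mem[OF A B cg])
    moreover have "bounded_decomp A B (lm f) (f - cg)"
    proof (cases "f - cg = 0")
      case True
      then show ?thesis using bounded_decomp_zero[OF A B] by simp
    next
      case False
      have "Poly_Mapping.keys (f - cg) \<subseteq> {s. lt s (lm f)}"
        unfolding cg_def by (rule keys_cancel_lead_mon[OF keys_le_lead_mon[OF \<open>f \<noteq> 0\<close>] g(2,3)])
      then have "lt (lm (f - cg)) (lm f)"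
        by (rule lead_mon_less[OF False])
      moreover have "f - cg \<in> ideal_sum A B"
        using ideal_diff[OF is_ideal_ideal_sum[OF A B] less.prems] cg
          mem_ideal_sum_left[OF B] mem_ideal_sum_right[OF A] by blast
      ultimately show ?thesis
        using less.IH[OF False] bounded_decomp_mono by blast
    qed
    ultimately show ?thesis
      using bounded_decomp_add[OF A B] by fastforce
  qed
qed

lemma lead_mons_Int_subset_from_Un:
  fixes A B :: "('v, 'a::field) mpoly set"
  assumes A: "is_ideal A" and B: "is_ideal B"
    and Un: "lead_mons (ideal_sum A B) \<subseteq> lead_mons A \<union> lead_mons B"
  shows "lead_mons A \<inter> lead_mons B \<subseteq> lead_mons (A \<inter> B)"
proof
  fix m
  assume "m \<in> lead_mons A \<inter> lead_mons B"
  then obtain g h where g: "g \<in> A" "g \<noteq> 0" "lm g = m" and h: "h \<in> B" "h \<noteq> 0" "lm h = m"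
    by (auto elim!: lead_monsE)
  define ch where "ch = Poly_Mapping.single 0 (Poly_Mapping.lookup g m / Poly_Mapping.lookup h m) * h"
  have ch: "ch \<in> B"
    unfolding ch_def by (rule ideal_mult[OF B h(1)])
  have keys_g: "Poly_Mapping.keys g \<subseteq> {s. le s m}"
    using keys_le_lead_mon[OF g(2)] g(3) by simp
  obtain a b where ab: "a \<in> A" "b \<in> B" "g - ch = a + b" "Poly_Mapping.keys a \<subseteq> {s. lt s m}"
  proof (cases "g - ch = 0")
    case True
    then show thesis using that[of 0 0] ideal_zero[OF A] ideal_zero[OF B] by simp
  next
    case False
    have "Poly_Mapping.keys (g - ch) \<subseteq> {s. lt s m}"
      unfolding ch_def by (rule keys_cancel_lead_mon[OF keys_g h(2,3)])
    then have lt: "lt (lm (g - ch)) m"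
      by (rule lead_mon_less[OF False])
    have "g - ch \<in> ideal_sum A B"
      using ideal_diff[OF is_ideal_ideal_sum[OF A B]] mem_ideal_sum_left[OF B g(1)]
        mem_ideal_sum_right[OF A ch] by blast
    then show thesis
      using bounded_decomp_lead_mon[OF A B Un] that le_lt_trans[OF _ lt]
      unfolding bounded_decomp_def by blast
  qed
  define u where "u = g - a"
  have "u \<in> A \<inter> B"
    using ideal_diff[OF A g(1) ab(1)] ideal_add[OF B ch ab(2)] ab(3)
    unfolding u_def by (simp add: algebra_simps)
  moreover have "Poly_Mapping.keys u \<subseteq> {s. le s m}"
    using keys_diff[of g a] keys_g ab(4) unfolding u_def by blast
  moreover have "Poly_Mapping.lookup u m \<noteq> 0"
    using lookup_lead_mon[OF g(2)] g(3) ab(4) unfolding u_def by (auto simp: lookup_minus in_keys_iff)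
  ultimately show "m \<in> lead_mons (A \<inter> B)"
    by (rule lead_monsI)
qed

lemma strict_decomp_if_lookup_zero:
  fixes A B :: "('v, 'a::field) mpoly set"
  assumes A: "is_ideal A" and B: "is_ideal B"
    and Int: "lead_mons A \<inter> lead_mons B \<subseteq> lead_mons (A \<inter> B)"
    and "bounded_decomp A B t f" and ft: "Poly_Mapping.lookup f t = 0"
  shows "\<exists>a\<in>A. \<exists>b\<in>B. f = a + b \<and> Poly_Mapping.keys a \<union> Poly_Mapping.keys b \<subseteq> {s. lt s t}"
proof -
  obtain a b where a: "a \<in> A" and b: "b \<in> B" and f: "f = a + b"
    and keys_a: "Poly_Mapping.keys a \<subseteq> {s. le s t}" and keys_b: "Poly_Mapping.keys b \<subseteq> {s. le s t}"
    using assms(4) unfolding bounded_decomp_def by blast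
  have sum_t: "Poly_Mapping.lookup a t + Poly_Mapping.lookup b t = 0"
    using ft f by (simp add: lookup_add)
  show ?thesis
  proof (cases "Poly_Mapping.lookup a t = 0")
    case True
    then have "t \<notin> Poly_Mapping.keys a \<union> Poly_Mapping.keys b"
      using sum_t by (simp add: in_keys_iff)
    then show ?thesis
      using a b f keys_a keys_b by blast
  next
    case False
    \<comment> \<open>the leading terms of a and b cancel, so t is a common leading monomial\<close>
    moreover have "Poly_Mapping.lookup b t \<noteq> 0"
      using False sum_t by (simp add: add_eq_0_iff)
    ultimately have "t \<in> lead_mons A \<inter> lead_mons B"
      using lead_monsI[OF a keys_a] lead_monsI[OF b keys_b] by blast
    then obtain u where u: "u \<in> A \<inter> B" "u \<noteq> 0" "lm u = t"
      using Int by (auto elim: lead_monsE)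
    define a' where "a' = a - Poly_Mapping.single 0 (Poly_Mapping.lookup a t / Poly_Mapping.lookup u t) * u"
    have keys_a': "Poly_Mapping.keys a' \<subseteq> {s. lt s t}"
      unfolding a'_def by (rule keys_cancel_lead_mon[OF keys_a u(2,3)])
    have "Poly_Mapping.keys f \<subseteq> {s. lt s t}"
      using keys_add[of a b] keys_a keys_b ft f by (auto simp: in_keys_iff)
    then have "Poly_Mapping.keys (f - a') \<subseteq> {s. lt s t}"
      using keys_diff[of f a'] keys_a' by blast
    moreover have "a' \<in> A"
      unfolding a'_def using ideal_diff[OF A a ideal_mult[OF A]] u(1) by blast
    moreover have "f - a' \<in> B"
    proof -
      have "f - a' = b + Poly_Mapping.single 0 (Poly_Mapping.lookup a t / Poly_Mapping.lookup u t) * u"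
        unfolding a'_def f by simp
      then show ?thesis
        using ideal_add[OF B b ideal_mult[OF B]] u(1) by simp
    qed
    ultimately show ?thesis
      using keys_a' by (intro bexI[of _ a'] bexI[of _ "f - a'"]) auto
  qed
qed

lemma bounded_decomp_max_key:
  assumes "f \<noteq> 0" and "a \<in> A" and "b \<in> B" and "f = a + b"
  obtains t where "t \<in> Poly_Mapping.keys a \<union> Poly_Mapping.keys b" and "bounded_decomp A B t f"
proof -
  have "Poly_Mapping.keys a \<union> Poly_Mapping.keys b \<noteq> {}"
    using assms(1,4) by auto
  then obtain t where "t \<in> Poly_Mapping.keys a \<union> Poly_Mapping.keys b"
    "Poly_Mapping.keys a \<union> Poly_Mapping.keys b \<subseteq> {s. le s t}"
    using ex_max[of "Poly_Mapping.keys a \<union> Poly_Mapping.keys b"] by auto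
  then show thesis
    using that assms(2-4) unfolding bounded_decomp_def by blast
qed

lemma ex_minimal_bounded_decomp:
  assumes "f \<in> ideal_sum A B" and "f \<noteq> 0"
  obtains t where "bounded_decomp A B t f" and "\<And>t'. lt t' t \<Longrightarrow> \<not> bounded_decomp A B t' f"
proof -
  obtain a b where "a \<in> A" "b \<in> B" "f = a + b"
    using assms(1) unfolding ideal_sum_def by blast
  then obtain t0 where "bounded_decomp A B t0 f"
    using bounded_decomp_max_key[OF assms(2)] by blast
  then have "t0 \<in> {t. bounded_decomp A B t f}"
    by simp
  then show thesis
    by (rule wfE_min[OF wf_lt]) (use that in auto)
qed

lemma lead_mons_ideal_sum_subset_from_Int:
  fixes A B :: "('v, 'a::field) mpoly set"
  assumes A: "is_ideal A" and B: "is_ideal B"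
    and Int: "lead_mons A \<inter> lead_mons B \<subseteq> lead_mons (A \<inter> B)"
  shows "lead_mons (ideal_sum A B) \<subseteq> lead_mons A \<union> lead_mons B"
proof
  fix m
  assume "m \<in> lead_mons (ideal_sum A B)"
  then obtain f where f: "f \<in> ideal_sum A B" "f \<noteq> 0" "lm f = m"
    by (rule lead_monsE)
  obtain t where t: "bounded_decomp A B t f"
    and min: "\<And>t'. lt t' t \<Longrightarrow> \<not> bounded_decomp A B t' f"
    using ex_minimal_bounded_decomp[OF f(1,2)] by blast
  \<comment> \<open>a decomposition with minimal bound t cannot cancel the coefficient of t\<close>
  have ft: "Poly_Mapping.lookup f t \<noteq> 0"
  proof
    assume "Poly_Mapping.lookup f t = 0"
    then obtain a b where "a \<in> A" "b \<in> B" "f = a + b"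
      and "Poly_Mapping.keys a \<union> Poly_Mapping.keys b \<subseteq> {s. lt s t}"
      using strict_decomp_if_lookup_zero[OF A B Int t] by blast
    then show False
      using bounded_decomp_max_key[OF f(2)] min by blast
  qed
  obtain a b where a: "a \<in> A" and b: "b \<in> B" and "f = a + b"
    and keys_a: "Poly_Mapping.keys a \<subseteq> {s. le s t}" and keys_b: "Poly_Mapping.keys b \<subseteq> {s. le s t}"
    using t unfolding bounded_decomp_def by blast
  then have "lm f = t" "Poly_Mapping.lookup a t \<noteq> 0 \<or> Poly_Mapping.lookup b t \<noteq> 0"
    using lead_mon_eqI[OF _ ft] keys_add[of a b] ft by (auto simp: lookup_add)
  then show "m \<in> lead_mons A \<union> lead_mons B"
    using f(3) lead_monsI[OF a keys_a] lead_monsI[OF b keys_b] by blast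
qed

lemma g_nice_iff_lead_mons_Int:
  fixes A B :: "('v, 'a::field) mpoly set"
  assumes A: "is_ideal A" and B: "is_ideal B"
  shows "g_nice le A B \<longleftrightarrow> lead_mons (A \<inter> B) = lead_mons A \<inter> lead_mons B"
proof -
  have "A \<subseteq> ideal_sum A B" "B \<subseteq> ideal_sum A B"
    using mem_ideal_sum_left[OF B] mem_ideal_sum_right[OF A] by blast+
  then have "lead_mons A \<union> lead_mons B \<subseteq> lead_mons (ideal_sum A B)"
    using lead_mons_mono by blast
  moreover have "lead_mons (A \<inter> B) \<subseteq> lead_mons A \<inter> lead_mons B"
    using lead_mons_mono by blast
  ultimately show ?thesis
    unfolding g_nice_iff_lead_mons_Un[OF A B]
    using lead_mons_Int_subset_from_Un[OF A B] lead_mons_ideal_sum_subset_from_Int[OF A B] by blast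
qed

end

theorem mainTheorem5:
  fixes le :: "('v::finite \<Rightarrow>\<^sub>0 nat) \<Rightarrow> ('v \<Rightarrow>\<^sub>0 nat) \<Rightarrow> bool"
    and J E E' :: "('v, 'a::field) mpoly set"
  assumes "monomial_order le"
    and "is_ideal J" and "is_ideal E" and "is_ideal E'"
    and "g_nice le J E" and "g_nice le J E'"
  shows "(ideal_sum (J \<inter> E) (J \<inter> E') = J \<inter> ideal_sum E E' \<and> g_nice le J (ideal_sum E E'))
     \<longleftrightarrow> init_ideal le (ideal_sum (J \<inter> E) (J \<inter> E')) = init_ideal le J \<inter> init_ideal le (ideal_sum E E')"
proof -
  interpret monomial_ordering le
    by (rule monomial_ordering.intro) (rule assms(1))
  define F where "F = ideal_sum E E'"
  define P where "P = ideal_sum (J \<inter> E) (J \<inter> E')"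
  have J: "is_ideal J" and F: "is_ideal F" and JF: "is_ideal (J \<inter> F)"
    and P: "is_ideal P"
    using assms(2-4) is_ideal_Int is_ideal_ideal_sum unfolding F_def P_def by blast+
  have "P \<subseteq> J \<inter> F"
    unfolding P_def F_def using assms(3,4) mem_ideal_sum_left mem_ideal_sum_right
    by (intro ideal_sum_least[OF JF[unfolded F_def]]) blast+
  then have "lead_mons P \<subseteq> lead_mons (J \<inter> F)"
    and "lead_mons (J \<inter> F) \<subseteq> lead_mons J \<inter> lead_mons F"
    using lead_mons_mono by blast+
  then have "(P = J \<inter> F \<and> lead_mons (J \<inter> F) = lead_mons J \<inter> lead_mons F)
      \<longleftrightarrow> lead_mons P = lead_mons J \<inter> lead_mons F"
    using ideal_eq_if_lead_mons_subset[OF P JF \<open>P \<subseteq> J \<inter> F\<close>] by blast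
  then show ?thesis
    using g_nice_iff_lead_mons_Int[OF J F] init_ideal_eq_Int_iff[OF J F P]
    unfolding F_def P_def by blast
qed

end
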